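(* Let $X$ be a bounded subset of $\mathbb R^n$. For every $\epsilon>0$ there exists $\delta>0$ such that for every continuous path $\alpha:[0,1]\to X$ with $\mathcal T(\alpha)<\delta$ we have $\operatorname{diam}(\operatorname{Im}(\alpha))\le\epsilon$.
   Context: Let $g:\mathbb R^n\to[-1,1]$ depend only on the first coordinate $x_1$: $g=-1$ if $x_1\le-3$, $\frac12(x_1+1)$ if $-3\le x_1\le-1$, $0$ if $-1\le x_1\le1$, $\frac12(x_1-1)$ if $1\le x_1\le3$, $1$ if $x_1\ge3$. For a pair $(P,Q)$ of distinct parallel hyperplanes let $g_{(P,Q)}=g\circ h_{(P,Q)}$ where $h_{(P,Q)}$ is a composition of a dilation, rotation and translation sending $P$ to $\{x_1=-3\}$ and $Q$ to $\{x_1=3\}$. For continuous $f:[a,b]\to\mathbb R^n$, $o(f,(P,Q))$ is the supremum of $-\sum_{i=1}^k g_{(P,Q)}(f(a_{i-1}))g_{(P,Q)}(f(a_i))$ over finite $a\le a_0\le\dots\le a_k\le b$ (empty sums $=0$). Fixing a countable dense set $\{(P_i,Q_i)\}$ in the separable metric space of pairs of parallel hyperplanes, the total oscillation is $\mathcal T(\alpha)=\sum_{i\ge1}2^{-i}\frac{o(\alpha,(P_i,Q_i))}{1+o(\alpha,(P_i,Q_i))}$. *)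

theory Defs
  imports "HOL-Analysis.Analysis"
begin

definition gfun :: "real \<Rightarrow> real" where
  "gfun y = (if y \<le> -3 then -1
             else if y \<le> -1 then (y + 1) / 2
             else if y \<le> 1 then 0
             else if y \<le> 3 then (y - 1) / 2
             else 1)"

text \<open>An ordered pair (P,Q) of distinct parallel hyperplanes is represented by a triple
  (u,s,t) with u a unit vector and s \<noteq> t:  P = {x. u \<bullet> x = s},  Q = {x. u \<bullet> x = t}.
  The triples (u,s,t) and (-u,-s,-t) represent the same pair.\<close>
definition hyp_pair :: "'a::euclidean_space \<times> real \<times> real \<Rightarrow> bool" where
  "hyp_pair p = (case p of (u, s, t) \<Rightarrow> norm u = 1 \<and> s \<noteq> t)"

text \<open>The first coordinate of h_(P,Q)(x): affine in u\<bullet>x, sending P to -3 and Q to 3.\<close>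
definition gpair :: "'a::euclidean_space \<times> real \<times> real \<Rightarrow> 'a \<Rightarrow> real" where
  "gpair p x = (case p of (u, s, t) \<Rightarrow> gfun (-3 + 6 * (u \<bullet> x - s) / (t - s)))"

definition osc :: "real \<Rightarrow> real \<Rightarrow> (real \<Rightarrow> 'a::euclidean_space) \<Rightarrow> 'a \<times> real \<times> real \<Rightarrow> real" where
  "osc a b f p = Sup {- (\<Sum>i=1..k. gpair p (f (c (i - 1))) * gpair p (f (c i))) | c k.
       a \<le> c 0 \<and> (\<forall>i<k. c i \<le> c (Suc i)) \<and> c k \<le> b}"

definition dense_pair_seq :: "(nat \<Rightarrow> 'a::euclidean_space \<times> real \<times> real) \<Rightarrow> bool" where
  "dense_pair_seq H \<longleftrightarrow> (\<forall>i. hyp_pair (H i)) \<and>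
     (\<forall>u s t e. hyp_pair (u, s, t) \<and> e > 0 \<longrightarrow>
        (\<exists>i. dist (H i) (u, s, t) < e \<or> dist (H i) (-u, -s, -t) < e))"

text \<open>Total oscillation of a path on [0,1]; H 0, H 1, ... is (P_1,Q_1), (P_2,Q_2), ...\<close>
definition total_osc :: "(nat \<Rightarrow> 'a::euclidean_space \<times> real \<times> real) \<Rightarrow> (real \<Rightarrow> 'a) \<Rightarrow> real" where
  "total_osc H \<alpha> = (\<Sum>i. (1/2) ^ (Suc i) * (osc 0 1 \<alpha> (H i) / (1 + osc 0 1 \<alpha> (H i))))"

end

theory Submission imports Defs begin

text \<open>For distinct points x, y the pair of hyperplanes through x and y orthogonal to y - x
  gives g(x) g(y) = -1, so by continuity and density some listed pair (P_i,Q_i) gives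
  g_i(x) g_i(y) < -1/2. By compactness, finitely many indices i \<le> N suffice for all pairs of
  points of X at distance at least \<epsilon>. A path whose image has diameter > \<epsilon> therefore has
  oscillation \<ge> 1/2 with respect to some (P_i,Q_i) with i \<le> N, and so total oscillation
  at least 2^-(N+1)/3.\<close>

lemma gfun_eq_clamp: "gfun y = max (-1) (min 1 ((max y 1 + min y (-1)) * (1/2)))"
  unfolding gfun_def by (auto simp: max_def min_def)

lemma continuous_on_gfun [continuous_intros]:
  "continuous_on S f \<Longrightarrow> continuous_on S (\<lambda>x. gfun (f x))"
  by (simp only: gfun_eq_clamp) (intro continuous_intros)

lemma continuous_gfun [continuous_intros]: "continuous F f \<Longrightarrow> continuous F (\<lambda>x. gfun (f x))"
  by (simp only: gfun_eq_clamp) (intro continuous_intros)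

lemma abs_gfun_le_1: "\<bar>gfun y\<bar> \<le> 1"
  unfolding gfun_def by auto

lemma gfun_mult_nonneg:
  assumes "\<bar>y - z\<bar> < 2"
  shows "0 \<le> gfun y * gfun z"
proof -
  have "(0 \<le> gfun y \<and> 0 \<le> gfun z) \<or> (gfun y \<le> 0 \<and> gfun z \<le> 0)"
    using assms unfolding gfun_def by auto
  then show ?thesis by (auto simp: zero_le_mult_iff)
qed

lemma gpair_eq:
  "gpair p x = gfun (-3 + 6 * (fst p \<bullet> x - fst (snd p)) / (snd (snd p) - fst (snd p)))"
  by (cases p) (simp add: gpair_def)

lemma gpair_uminus: "gpair (-p) x = gpair p x"
proof -
  obtain u s t where p: "p = (u, s, t)" by (cases p)
  have "6 * (-u \<bullet> x - - s) / (- t - - s) = (- (6 * (u \<bullet> x - s))) / (- (t - s))"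
    by (simp add: algebra_simps)
  also have "\<dots> = 6 * (u \<bullet> x - s) / (t - s)" by (rule minus_divide_divide)
  finally show ?thesis by (simp add: p gpair_def del: inner_minus_left)
qed

lemma continuous_gpair_mult:
  assumes "snd (snd p) \<noteq> fst (snd p)"
  shows "continuous (at p) (\<lambda>q. gpair q x * gpair q y)"
  unfolding gpair_eq using assms by (intro continuous_intros) auto

lemma continuous_on_gpair:
  assumes "hyp_pair p" "continuous_on S f"
  shows "continuous_on S (\<lambda>z. gpair p (f z))"
  using assms unfolding gpair_eq hyp_pair_def by (cases p) (auto intro!: continuous_intros)

definition osc_set :: "real \<Rightarrow> real \<Rightarrow> (real \<Rightarrow> 'a::euclidean_space) \<Rightarrow> 'a \<times> real \<times> real \<Rightarrow> real set"
  where "osc_set a b f p = {- (\<Sum>i=1..k. gpair p (f (c (i - 1))) * gpair p (f (c i))) | c k.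
       a \<le> c 0 \<and> (\<forall>i<k. c i \<le> c (Suc i)) \<and> c k \<le> b}"

lemma osc_eq_Sup_osc_set: "osc a b f p = Sup (osc_set a b f p)"
  by (simp add: osc_def osc_set_def)

text \<open>Uniform continuity gives d > 0 such that points of the partition closer than d
  contribute a nonpositive term; every other term is at most 1 \<le> (t - s)/d.\<close>
lemma bdd_above_osc_set:
  assumes "continuous_on {a..b} f" "hyp_pair p"
  shows "bdd_above (osc_set a b f p)"
proof -
  define \<phi> where "\<phi> t = -3 + 6 * (fst p \<bullet> f t - fst (snd p)) / (snd (snd p) - fst (snd p))" for t
  have gpair_f: "gpair p (f t) = gfun (\<phi> t)" for t by (simp add: gpair_eq \<phi>_def)
  have "continuous_on {a..b} \<phi>" unfolding \<phi>_def using assms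
    by (cases p) (auto simp: hyp_pair_def intro!: continuous_intros)
  then have "uniformly_continuous_on {a..b} \<phi>" by (rule compact_uniformly_continuous) auto
  then obtain d where d: "d > 0"
    and d_close: "\<forall>x\<in>{a..b}. \<forall>x'\<in>{a..b}. dist x' x < d \<longrightarrow> dist (\<phi> x') (\<phi> x) < 2"
    unfolding uniformly_continuous_on_def by (meson zero_less_numeral)
  have term_le: "- (gfun (\<phi> s) * gfun (\<phi> t)) \<le> (t - s) / d"
    if "s \<in> {a..b}" "t \<in> {a..b}" "s \<le> t" for s t
  proof (cases "t - s < d")
    case True
    then have "\<bar>\<phi> t - \<phi> s\<bar> < 2" using d_close that by (auto simp: dist_real_def)
    then have "0 \<le> gfun (\<phi> s) * gfun (\<phi> t)" by (intro gfun_mult_nonneg) auto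
    moreover have "0 \<le> (t - s) / d" using that d by auto
    ultimately show ?thesis by linarith
  next
    case False
    then have "1 \<le> (t - s) / d" using d by (simp add: le_divide_eq)
    moreover have "\<bar>gfun (\<phi> s) * gfun (\<phi> t)\<bar> \<le> 1"
      unfolding abs_mult using abs_gfun_le_1 by (intro mult_le_one) auto
    ultimately show ?thesis by linarith
  qed
  show ?thesis
  proof (rule bdd_aboveI)
    fix z assume "z \<in> osc_set a b f p"
    then obtain c k where z: "z = - (\<Sum>i=1..k. gpair p (f (c (i - 1))) * gpair p (f (c i)))"
      and c: "a \<le> c 0" "\<forall>i<k. c i \<le> c (Suc i)" "c k \<le> b"
      unfolding osc_set_def by blast
    have c_mono: "c i \<le> c j" if "i \<le> j" "j \<le> k" for i j
      by (rule lift_Suc_mono_le_ivl[of "{..<k}"]) (use c(2) that in auto)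
    have z_eq: "z = (\<Sum>i<k. - (gfun (\<phi> (c i)) * gfun (\<phi> (c (Suc i)))))"
      unfolding z gpair_f by (simp add: sum_negf sum.atLeast1_atMost_eq)
    have "z \<le> (\<Sum>i<k. (c (Suc i) - c i) / d)"
      unfolding z_eq
    proof (rule sum_mono)
      fix i assume "i \<in> {..<k}"
      then have "a \<le> c i" "c i \<le> c (Suc i)" "c (Suc i) \<le> b"
        using c c_mono[of 0 i] c_mono[of "Suc i" k] by auto
      then show "- (gfun (\<phi> (c i)) * gfun (\<phi> (c (Suc i)))) \<le> (c (Suc i) - c i) / d"
        by (intro term_le) auto
    qed
    also have "\<dots> = (c k - c 0) / d"
      by (simp only: sum_divide_distrib[symmetric] sum_lessThan_telescope)
    also have "\<dots> \<le> (b - a) / d" using c d by (simp add: divide_right_mono)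
    finally show "z \<le> (b - a) / d" .
  qed
qed

lemma osc_nonneg:
  assumes "a \<le> b" "continuous_on {a..b} f" "hyp_pair p"
  shows "0 \<le> osc a b f p"
proof -
  have "0 \<in> osc_set a b f p" unfolding osc_set_def
    by (rule CollectI, rule exI[of _ "\<lambda>_. a"], rule exI[of _ 0]) (simp add: assms(1))
  then show ?thesis unfolding osc_eq_Sup_osc_set by (rule cSup_upper[OF _ bdd_above_osc_set[OF assms(2,3)]])
qed

lemma osc_ge_mult:
  assumes "continuous_on {a..b} f" "hyp_pair p" "s \<in> {a..b}" "t \<in> {a..b}"
  shows "- (gpair p (f s) * gpair p (f t)) \<le> osc a b f p"
proof -
  have "- (gpair p (f s) * gpair p (f t)) \<in> osc_set a b f p"
  proof (cases "s \<le> t")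
    case True
    then show ?thesis unfolding osc_set_def
      by (intro CollectI exI[of _ "\<lambda>i. if i = 0 then s else t"] exI[of _ 1]) (use assms in auto)
  next
    case False
    then show ?thesis unfolding osc_set_def
      by (intro CollectI exI[of _ "\<lambda>i. if i = 0 then t else s"] exI[of _ 1]) (use assms in auto)
  qed
  then show ?thesis unfolding osc_eq_Sup_osc_set by (rule cSup_upper[OF _ bdd_above_osc_set[OF assms(1,2)]])
qed

lemma total_osc_ge_term:
  assumes "continuous_on {0..1} \<alpha>" "\<And>i. hyp_pair (H i)"
  shows "(1/2) ^ Suc i * (osc 0 1 \<alpha> (H i) / (1 + osc 0 1 \<alpha> (H i))) \<le> total_osc H \<alpha>"
proof -
  define f where "f n = (1/2::real) ^ Suc n * (osc 0 1 \<alpha> (H n) / (1 + osc 0 1 \<alpha> (H n)))" for n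
  have osc_nn: "0 \<le> osc 0 1 \<alpha> (H n)" for n using osc_nonneg[OF _ assms(1) assms(2)] by simp
  then have f_nn: "0 \<le> f n" for n by (simp add: f_def)
  have f_le: "f n \<le> (1/2) ^ Suc n" for n
    unfolding f_def using osc_nn[of n] by (intro mult_left_le) auto
  have "summable (\<lambda>n. (1/2::real) ^ Suc n)"
    using summable_mult[OF summable_geometric[of "1/2::real"], of "1/2"] by simp
  then have "summable f" by (rule summable_comparison_test'[of _ 0]) (use f_nn f_le in auto)
  then have "sum f {i} \<le> suminf f" by (rule sum_le_suminf) (use f_nn in auto)
  moreover have "suminf f = total_osc H \<alpha>" unfolding total_osc_def f_def ..
  ultimately show ?thesis by (simp add: f_def)
qed

lemma total_osc_ge_if_mult_lt:
  assumes "continuous_on {0..1} \<alpha>" "\<And>i. hyp_pair (H i)" "s \<in> {0..1}" "t \<in> {0..1}"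
    and "i \<le> N" "gpair (H i) (\<alpha> s) * gpair (H i) (\<alpha> t) < -1/2"
  shows "(1/2) ^ Suc N / 3 \<le> total_osc H \<alpha>"
proof -
  have "1/2 \<le> osc 0 1 \<alpha> (H i)"
    using osc_ge_mult[OF assms(1) assms(2)[of i] assms(3,4)] assms(6) by linarith
  then have "1/3 \<le> osc 0 1 \<alpha> (H i) / (1 + osc 0 1 \<alpha> (H i))"
    by (simp add: le_divide_eq)
  moreover have "(1/2::real) ^ Suc N \<le> (1/2) ^ Suc i"
    using assms(5) by (intro power_decreasing) auto
  ultimately have "(1/2::real) ^ Suc N * (1/3) \<le> (1/2) ^ Suc i * (osc 0 1 \<alpha> (H i) / (1 + osc 0 1 \<alpha> (H i)))"
    by (intro mult_mono) auto
  also have "\<dots> \<le> total_osc H \<alpha>" using total_osc_ge_term assms(1,2) by blast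
  finally show ?thesis by simp
qed

lemma hyp_pair_through_points:
  fixes x y :: "'a::euclidean_space"
  assumes "x \<noteq> y"
  shows "\<exists>p. hyp_pair p \<and> gpair p x * gpair p y = -1"
proof -
  define n where "n = norm (y - x)"
  have n: "n > 0" using assms by (simp add: n_def)
  define u where "u = (1/n) *\<^sub>R (y - x)"
  have "u \<bullet> y - u \<bullet> x = (1/n) * ((y - x) \<bullet> (y - x))"
    by (simp add: u_def inner_diff_right diff_divide_distrib)
  also have "\<dots> = n" using n by (simp add: n_def power2_norm_eq_inner[symmetric] power2_eq_square)
  finally have uyx: "u \<bullet> y - u \<bullet> x = n" .
  have "norm u = 1" using n by (simp add: u_def n_def)
  then have "hyp_pair (u, u \<bullet> x, u \<bullet> y)" using uyx n by (simp add: hyp_pair_def)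
  moreover have "-3 + 6 * (u \<bullet> y - u \<bullet> x) / (u \<bullet> y - u \<bullet> x) = 3" using uyx n by simp
  then have "gpair (u, u \<bullet> x, u \<bullet> y) y = gfun 3" by (simp only: gpair_def prod.case)
  then have "gpair (u, u \<bullet> x, u \<bullet> y) x * gpair (u, u \<bullet> x, u \<bullet> y) y = -1"
    by (simp add: gpair_def gfun_def)
  ultimately show ?thesis by blast
qed

lemma dense_pair_seq_separates:
  fixes x y :: "'a::euclidean_space"
  assumes "dense_pair_seq H" "x \<noteq> y"
  shows "\<exists>i. gpair (H i) x * gpair (H i) y < -1/2"
proof -
  obtain p where hyp: "hyp_pair p" and prod_p: "gpair p x * gpair p y = -1"
    using hyp_pair_through_points[OF assms(2)] by blast
  obtain u s t where p: "p = (u, s, t)" by (cases p)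
  have "continuous (at p) (\<lambda>q. gpair q x * gpair q y)"
    by (rule continuous_gpair_mult) (use hyp in \<open>simp add: p hyp_pair_def\<close>)
  then obtain e where e: "e > 0"
    and e_close: "\<And>q. dist q p < e \<Longrightarrow> dist (gpair q x * gpair q y) (gpair p x * gpair p y) < 1/2"
    unfolding continuous_at_eps_delta by (meson zero_less_divide_1_iff zero_less_numeral)
  have near_p: "gpair q x * gpair q y < -1/2" if "dist q p < e" for q
  proof -
    have "\<bar>gpair q x * gpair q y + 1\<bar> < 1/2"
      using e_close[OF that] by (simp add: dist_real_def prod_p)
    then show ?thesis by linarith
  qed
  obtain i where "dist (H i) p < e \<or> dist (H i) (-u, -s, -t) < e"
    using assms(1) hyp e unfolding dense_pair_seq_def p by blast
  moreover have "dist (H i) (-u, -s, -t) = dist (- H i) p"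
    using dist_minus[of "H i" "- p"] by (simp add: p)
  ultimately have "dist (H i) p < e \<or> dist (- H i) p < e" by simp
  then show ?thesis
  proof
    assume "dist (H i) p < e"
    then show ?thesis using near_p by blast
  next
    assume "dist (- H i) p < e"
    then show ?thesis using near_p[of "- H i"] unfolding gpair_uminus by blast
  qed
qed

text \<open>The pairs at distance at least \<epsilon> in a closed ball around X form a compact set,
  covered by the open sets on which the i-th product is below -1/2.\<close>
lemma finitely_many_pairs_separate:
  fixes X :: "'a::euclidean_space set"
  assumes "bounded X" "dense_pair_seq H" "\<epsilon> > 0"
  shows "\<exists>N. \<forall>x\<in>X. \<forall>y\<in>X. \<epsilon> \<le> dist x y \<longrightarrow> (\<exists>i\<le>N. gpair (H i) x * gpair (H i) y < -1/2)"
proof -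
  have hyp: "\<And>i. hyp_pair (H i)" using assms(2) by (simp add: dense_pair_seq_def)
  obtain R x0 where R: "X \<subseteq> cball x0 R" using assms(1) bounded_subset_cball by blast
  define C where "C = (cball x0 R \<times> cball x0 R) \<inter> {z. \<epsilon> \<le> dist (fst z) (snd z)}"
  define V where "V i = {z. gpair (H i) (fst z) * gpair (H i) (snd z) < -1/2}" for i
  have "compact C" unfolding C_def
    by (intro compact_Int_closed compact_Times compact_cball closed_Collect_le continuous_intros)
  moreover have "open (V i)" for i unfolding V_def
    by (intro open_Collect_less continuous_intros continuous_on_mult continuous_on_gpair hyp)
  moreover have "C \<subseteq> (\<Union>i. V i)"
  proof
    fix z assume "z \<in> C"
    then have "fst z \<noteq> snd z" using assms(3) by (auto simp: C_def)
    then obtain i where "gpair (H i) (fst z) * gpair (H i) (snd z) < -1/2"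
      using dense_pair_seq_separates[OF assms(2)] by blast
    then show "z \<in> (\<Union>i. V i)" by (auto simp: V_def)
  qed
  ultimately obtain F where F: "finite F" "C \<subseteq> (\<Union>i\<in>F. V i)"
    by (meson compactE_image)
  obtain N where N: "\<forall>i\<in>F. i \<le> N" using F(1) finite_nat_set_iff_bounded_le by blast
  show ?thesis
  proof (rule exI[of _ N], intro ballI impI)
    fix x y assume "x \<in> X" "y \<in> X" "\<epsilon> \<le> dist x y"
    then have "(x, y) \<in> C" using R by (auto simp: C_def)
    then obtain i where "i \<in> F" "(x, y) \<in> V i" using F(2) by blast
    then show "\<exists>i\<le>N. gpair (H i) x * gpair (H i) y < -1/2" using N by (auto simp: V_def)
  qed
qed

theorem lemma3p15:
  fixes X :: "'a::euclidean_space set"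
    and H :: "nat \<Rightarrow> 'a \<times> real \<times> real"
  assumes "bounded X"
    and "dense_pair_seq H"
  shows "\<forall>\<epsilon>>0. \<exists>\<delta>>0. \<forall>\<alpha>. continuous_on {0..1} \<alpha> \<and> \<alpha> ` {0..1} \<subseteq> X
             \<and> total_osc H \<alpha> < \<delta> \<longrightarrow> diameter (\<alpha> ` {0..1}) \<le> \<epsilon>"
proof (intro allI impI)
  fix \<epsilon> :: real assume "\<epsilon> > 0"
  have hyp: "\<And>i. hyp_pair (H i)" using assms(2) by (simp add: dense_pair_seq_def)
  obtain N where N: "\<forall>x\<in>X. \<forall>y\<in>X. \<epsilon> \<le> dist x y \<longrightarrow> (\<exists>i\<le>N. gpair (H i) x * gpair (H i) y < -1/2)"
    using finitely_many_pairs_separate[OF assms \<open>\<epsilon> > 0\<close>] by blast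
  show "\<exists>\<delta>>0. \<forall>\<alpha>. continuous_on {0..1} \<alpha> \<and> \<alpha> ` {0..1} \<subseteq> X
             \<and> total_osc H \<alpha> < \<delta> \<longrightarrow> diameter (\<alpha> ` {0..1}) \<le> \<epsilon>"
  proof (intro exI[of _ "(1/2) ^ Suc N / 3"] conjI allI impI)
    fix \<alpha> :: "real \<Rightarrow> 'a"
    assume \<alpha>: "continuous_on {0..1} \<alpha> \<and> \<alpha> ` {0..1} \<subseteq> X \<and> total_osc H \<alpha> < (1/2) ^ Suc N / 3"
    show "diameter (\<alpha> ` {0..1}) \<le> \<epsilon>"
    proof (rule ccontr)
      assume "\<not> diameter (\<alpha> ` {0..1}) \<le> \<epsilon>"
      then have "\<epsilon> < diameter (\<alpha> ` {0..1})" by simp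
      moreover have "bounded (\<alpha> ` {0..1})"
        using \<alpha> by (intro compact_imp_bounded compact_continuous_image) auto
      ultimately have "\<exists>x\<in>\<alpha> ` {0..1}. \<exists>y\<in>\<alpha> ` {0..1}. \<epsilon> < dist x y"
        using diameter_lower_bounded \<open>\<epsilon> > 0\<close> by blast
      then obtain s t where st: "s \<in> {0..1}" "t \<in> {0..1}" "\<epsilon> \<le> dist (\<alpha> s) (\<alpha> t)"
        by (auto simp: less_imp_le)
      moreover have "\<alpha> s \<in> X" "\<alpha> t \<in> X" using \<alpha> st by auto
      ultimately obtain i where "i \<le> N" "gpair (H i) (\<alpha> s) * gpair (H i) (\<alpha> t) < -1/2"
        using N by blast
      then have "(1/2) ^ Suc N / 3 \<le> total_osc H \<alpha>"
        using total_osc_ge_if_mult_lt \<alpha> hyp st by blast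
      then show False using \<alpha> by linarith
    qed
  qed simp
qed

end
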